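(* Let $(G,\lambda)$ be a finite abelian $2$-group with a nonsingular symmetric linking pairing, let $k\ge1$, and assume the layer form $b_k$ is alternating. Define $q_k:H_k(G)\to\mathbb Q/\mathbb Z$ by $q_k(\bar x)=2^{k-1}\lambda(x,x)$ for $x\in G$ representing $\bar x\in H_k(G)=G/G_k$. Then $q_k$ is well-defined and satisfies $q_k(\bar x+\bar y)-q_k(\bar x)-q_k(\bar y)=2^k\lambda(x,y)\in\mathbb Q/\mathbb Z$ for all $\bar x,\bar y\in H_k(G)$.
   Context: A linking pairing is a symmetric bilinear map $\lambda:G\times G\to\mathbb Q/\mathbb Z$, nonsingular if its adjoint $G\to\mathrm{Hom}(G,\mathbb Q/\mathbb Z)$ is an isomorphism. $G_k=\{x\in G:2^kx=0\}$, $G_0=0$, $P_k(G)=G_k/(G_{k-1}+2G_{k+1})$, and $b_k(\bar x,\bar y)=2^k\lambda(x,y)\bmod2$ is the induced $\mathbb F_2$-form on $P_k(G)$; alternating means $b_k(v,v)=0$ for all $v$ (this is the "Type E" case). *)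

theory Defs
  imports Main "HOL-Library.Quotient_Type" Complex_Main
begin

definition qz_rel :: "rat \<Rightarrow> rat \<Rightarrow> bool" where
  "qz_rel x y \<longleftrightarrow> x - y \<in> \<int>"

lemma equivp_qz_rel: "equivp qz_rel"
proof (rule equivpI)
  show "reflp qz_rel" by (auto simp: reflp_def qz_rel_def)
  show "symp qz_rel" unfolding symp_def qz_rel_def
  proof (intro allI impI)
    fix x y :: rat assume "x - y \<in> \<int>"
    then have "- (x - y) \<in> \<int>" by (rule Ints_minus)
    then show "y - x \<in> \<int>" by simp
  qed
  show "transp qz_rel" unfolding transp_def qz_rel_def
  proof (intro allI impI)
    fix x y z :: rat assume "x - y \<in> \<int>" "y - z \<in> \<int>"
    then have "(x - y) + (y - z) \<in> \<int>" by (rule Ints_add)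
    then show "x - z \<in> \<int>" by simp
  qed
qed

quotient_type qz = rat / qz_rel
  by (rule equivp_qz_rel)

instantiation qz :: ab_group_add
begin
lift_definition zero_qz :: qz is "0" .
lift_definition plus_qz :: "qz \<Rightarrow> qz \<Rightarrow> qz" is "(+)"
  unfolding qz_rel_def
proof -
  fix a b c d :: rat assume "a - b \<in> \<int>" "c - d \<in> \<int>"
  then have "(a - b) + (c - d) \<in> \<int>" by (rule Ints_add)
  then show "a + c - (b + d) \<in> \<int>" by (simp add: algebra_simps)
qed
lift_definition uminus_qz :: "qz \<Rightarrow> qz" is "uminus"
  unfolding qz_rel_def
proof -
  fix a b :: rat assume "a - b \<in> \<int>"
  then have "- (a - b) \<in> \<int>" by (rule Ints_minus)
  then show "- a - - b \<in> \<int>" by simp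
qed
lift_definition minus_qz :: "qz \<Rightarrow> qz \<Rightarrow> qz" is "(-)"
  unfolding qz_rel_def
proof -
  fix a b c d :: rat assume "a - b \<in> \<int>" "c - d \<in> \<int>"
  then have "(a - b) - (c - d) \<in> \<int>" by (rule Ints_diff)
  then show "a - c - (b - d) \<in> \<int>" by (simp add: algebra_simps)
qed
instance
  by standard (transfer; simp add: qz_rel_def algebra_simps)+
end

fun nmul :: "nat \<Rightarrow> 'a::ab_group_add \<Rightarrow> 'a" where
  "nmul 0 x = 0"
| "nmul (Suc n) x = x + nmul n x"

definition layer :: "nat \<Rightarrow> ('a::ab_group_add) set" where
  "layer k = {x. nmul (2 ^ k) x = 0}"

definition is_2group :: "'a::{ab_group_add,finite} itself \<Rightarrow> bool" where
  "is_2group _ \<longleftrightarrow> (\<forall>x::'a. \<exists>n. nmul (2 ^ n) x = 0)"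

definition symmetric_linking :: "('a::ab_group_add \<Rightarrow> 'a \<Rightarrow> qz) \<Rightarrow> bool" where
  "symmetric_linking lam \<longleftrightarrow>
     (\<forall>x y z. lam (x + y) z = lam x z + lam y z) \<and> (\<forall>x y. lam x y = lam y x)"

definition hom_to_qz :: "('a::ab_group_add \<Rightarrow> qz) set" where
  "hom_to_qz = {f. \<forall>x y. f (x + y) = f x + f y}"

definition nonsingular :: "('a::ab_group_add \<Rightarrow> 'a \<Rightarrow> qz) \<Rightarrow> bool" where
  "nonsingular lam \<longleftrightarrow> bij_betw lam UNIV hom_to_qz"

text \<open>b_k alternating: for x in G_k, b_k(xbar,xbar) = 2^k lam(x,x) mod 2 = 0,
  i.e. 2^(k-1) lam(x,x) = 0 in Q/Z (every element of P_k(G) has a representative in G_k).\<close>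
definition layer_form_alternating :: "('a::ab_group_add \<Rightarrow> 'a \<Rightarrow> qz) \<Rightarrow> nat \<Rightarrow> bool" where
  "layer_form_alternating lam k \<longleftrightarrow>
     (\<forall>x \<in> layer k. nmul (2 ^ (k - 1)) (lam x x) = 0)"

text \<open>q_k evaluated on a representative x of xbar in H_k(G) = G/G_k\<close>
definition qk :: "('a::ab_group_add \<Rightarrow> 'a \<Rightarrow> qz) \<Rightarrow> nat \<Rightarrow> 'a \<Rightarrow> qz" where
  "qk lam k x = nmul (2 ^ (k - 1)) (lam x x)"

end

theory Submission
  imports Defs
begin

text \<open>By biadditivity and symmetry, \<open>\<lambda>(x + y, x + y) = \<lambda>(x, x) + \<lambda>(y, y) + 2\<lambda>(x, y)\<close>;
  multiplying by \<open>2^(k-1)\<close> gives the polarization identity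
  \<open>q\<^sub>k(x + y) = q\<^sub>k(x) + q\<^sub>k(y) + 2^k\<lambda>(x, y)\<close> on representatives. For \<open>z \<in> G\<^sub>k\<close> we have
  \<open>2^k\<lambda>(y, z) = \<lambda>(y, 2^k z) = 0\<close>, and \<open>q\<^sub>k(z) = 0\<close> because \<open>b\<^sub>k\<close> is alternating, so the identity
  gives \<open>q\<^sub>k(y + z) = q\<^sub>k(y)\<close>.\<close>

lemma nmul_add: "nmul n (a + b) = nmul n a + nmul n (b::'a::ab_group_add)"
  by (induction n) (simp_all add: algebra_simps)

lemma nmul_add_count: "nmul (m + n) (a::'a::ab_group_add) = nmul m a + nmul n a"
  by (induction m) (simp_all add: algebra_simps)

lemma nmul_mult_2: "nmul (2 * n) (a::'a::ab_group_add) = nmul n (a + a)"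
  by (simp add: mult_2 nmul_add_count nmul_add)

lemma additive_nmul:
  assumes additive: "\<And>x y. f (x + y) = f x + f y"
  shows "f (nmul n x) = nmul n (f x)"
proof (induction n)
  case 0
  have "f 0 = f 0 + f 0" using additive[of 0 0] by simp
  then show ?case by simp
next
  case (Suc n)
  then show ?case by (simp add: additive)
qed

lemma symmetric_linking_add_left:
  "symmetric_linking lam \<Longrightarrow> lam (x + y) z = lam x z + lam y z"
  unfolding symmetric_linking_def by blast

lemma symmetric_linking_commute: "symmetric_linking lam \<Longrightarrow> lam x y = lam y x"
  unfolding symmetric_linking_def by blast

lemma symmetric_linking_add_right:
  "symmetric_linking lam \<Longrightarrow> lam z (x + y) = lam z x + lam z y"
  by (metis symmetric_linking_add_left symmetric_linking_commute)

lemma symmetric_linking_nmul_right: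
  "symmetric_linking lam \<Longrightarrow> lam x (nmul n y) = nmul n (lam x y)"
  by (rule additive_nmul) (rule symmetric_linking_add_right)

lemma symmetric_linking_zero_right: "symmetric_linking lam \<Longrightarrow> lam x 0 = 0"
  using symmetric_linking_add_right[of lam x 0 0] by simp

lemma symmetric_linking_diag_add:
  assumes "symmetric_linking lam"
  shows "lam (x + y) (x + y) = lam x x + lam y y + (lam x y + lam x y)"
  using symmetric_linking_add_left[OF assms] symmetric_linking_add_right[OF assms]
    symmetric_linking_commute[OF assms, of y x]
  by (simp add: algebra_simps)

lemma qk_add:
  assumes "symmetric_linking lam" and "k \<ge> 1"
  shows "qk lam k (x + y) = qk lam k x + qk lam k y + nmul (2 ^ k) (lam x y)"
proof -
  have "(2::nat) ^ k = 2 * 2 ^ (k - 1)"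
    using \<open>k \<ge> 1\<close> by (simp add: power_eq_if)
  then show ?thesis
    by (simp add: qk_def symmetric_linking_diag_add[OF assms(1)] nmul_add nmul_mult_2)
qed

lemma qk_eq_if_diff_in_layer:
  assumes lam: "symmetric_linking lam" and "k \<ge> 1"
    and alternating: "layer_form_alternating lam k"
    and diff: "x - y \<in> layer k"
  shows "qk lam k x = qk lam k y"
proof -
  let ?z = "x - y"
  have "nmul (2 ^ k) (lam y ?z) = lam y (nmul (2 ^ k) ?z)"
    by (simp add: symmetric_linking_nmul_right[OF lam])
  also have "\<dots> = 0"
    using diff by (simp add: layer_def symmetric_linking_zero_right[OF lam])
  finally have "nmul (2 ^ k) (lam y ?z) = 0" .
  moreover have "qk lam k ?z = 0"
    using alternating diff by (simp add: layer_form_alternating_def qk_def)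
  ultimately show ?thesis
    using qk_add[OF lam \<open>k \<ge> 1\<close>, of y ?z] by simp
qed

theorem proposition5p12:
  fixes lam :: "'a::{ab_group_add,finite} \<Rightarrow> 'a \<Rightarrow> qz" and k :: nat
  assumes "is_2group TYPE('a)"
    and "symmetric_linking lam"
    and "nonsingular lam"
    and "k \<ge> 1"
    and "layer_form_alternating lam k"
  shows "(\<forall>x y. x - y \<in> layer k \<longrightarrow> qk lam k x = qk lam k y)
       \<and> (\<forall>x y. qk lam k (x + y) - qk lam k x - qk lam k y = nmul (2 ^ k) (lam x y))"
  using qk_eq_if_diff_in_layer[OF assms(2,4,5)] qk_add[OF assms(2,4)] by simp

end
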